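(* Let $f:2^{\mathcal{E}_x}\to\mathbb{R}_{\ge 0}$ be normalized, monotone and submodular, let $\Delta\ge1$ be the maximum vertex degree of $\mathcal{G}$, and consider $(\mathrm{P}_1)$ under the constraint TU$_b$ (maximize $f(\mathcal{E})$ over $\mathcal{E}\subseteq\mathcal{E}_x$ with $|\mathcal{E}|\le k$ and some vertex cover $\mathcal{V}$ of $\mathcal{E}$ with $|\mathcal{V}|\le b$), with optimal value $\mathrm{OPT}_1$. The algorithm Submodular-Greedy, which runs both Edge-Greedy and Vertex-Greedy and returns whichever of the two returned edge sets has the larger $f$-value, returns a feasible solution with value at least $\alpha(b,k,\Delta)\cdot\mathrm{OPT}_1$, where $\alpha(b,k,\Delta)=1-\exp(-\min\{1,\gamma\})$ and $\gamma=\max\{b/k,\ \lfloor k/\Delta\rfloor/b\}$.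
   Context: $\mathcal{G}=(\mathcal{V}_x,\mathcal{E}_x)$ is a finite simple undirected graph; $b,k\ge1$ are integers. For $\mathcal{V}\subseteq\mathcal{V}_x$, $\mathsf{edges}(\mathcal{V})$ is the set of edges incident to at least one vertex of $\mathcal{V}$. A set function $h$ is normalized if $h(\varnothing)=0$, monotone if $h(A)\le h(B)$ for $A\subseteq B$, submodular if $h(A)+h(B)\ge h(A\cup B)+h(A\cap B)$. Edge-Greedy: Phase I: start with $\mathcal{E}_{\mathrm{grd}}=\varnothing$; for $\min(b,k)$ iterations (or until no edges remain), add an edge $e^\star\in\arg\max_{e\in\mathcal{E}_x\setminus\mathcal{E}_{\mathrm{grd}}}f(\mathcal{E}_{\mathrm{grd}}\cup\{e\})$; then let $\mathcal{V}_{\mathrm{grd}}$ be a vertex cover of $\mathcal{E}_{\mathrm{grd}}$ obtained by choosing one endpoint of each selected edge. Phase II (only if $k>b$): let $\mathcal{E}_{\mathrm{free}}=\mathsf{edges}(\mathcal{V}_{\mathrm{grd}})\setminus\mathcal{E}_{\mathrm{grd}}$; for $\min(|\mathcal{E}_{\mathrm{free}}|,k-b)$ iterations add $e^\star\in\arg\max_{e\in\mathcal{E}_{\mathrm{free}}\setminus\mathcal{E}_{\mathrm{grd}}}f(\mathcal{E}_{\mathrm{grd}}\cup\{e\})$; return $\mathcal{E}_{\mathrm{grd}}$. Vertex-Greedy: with $h(\mathcal{V})=f(\mathsf{edges}(\mathcal{V}))$, start with $\mathcal{V}_{\mathrm{grd}}=\varnothing$ and repeat: pick $v^\star\in\arg\max_{v\in\mathcal{V}_x\setminus\mathcal{V}_{\mathrm{grd}}}h(\mathcal{V}_{\mathrm{grd}}\cup\{v\})$;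 if $|\mathcal{V}_{\mathrm{grd}}\cup\{v^\star\}|>b$ or $|\mathsf{edges}(\mathcal{V}_{\mathrm{grd}}\cup\{v^\star\})|>k$ (or no vertex remains), stop; else add $v^\star$ to $\mathcal{V}_{\mathrm{grd}}$. Return $\mathsf{edges}(\mathcal{V}_{\mathrm{grd}})$. *)

theory Defs
  imports Complex_Main
begin

definition simple_graph :: "'a set \<Rightarrow> 'a set set \<Rightarrow> bool" where
  "simple_graph V E \<longleftrightarrow> finite V \<and>
     (\<forall>e\<in>E. \<exists>u v. u \<in> V \<and> v \<in> V \<and> u \<noteq> v \<and> e = {u, v})"

definition edges_of :: "'a set set \<Rightarrow> 'a set \<Rightarrow> 'a set set" where
  "edges_of E Vs = {e \<in> E. e \<inter> Vs \<noteq> {}}"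

definition is_vertex_cover :: "'a set \<Rightarrow> 'a set set \<Rightarrow> bool" where
  "is_vertex_cover Vc F \<longleftrightarrow> (\<forall>e\<in>F. e \<inter> Vc \<noteq> {})"

definition max_degree :: "'a set \<Rightarrow> 'a set set \<Rightarrow> nat" where
  "max_degree V E = Max ((\<lambda>v. card {e \<in> E. v \<in> e}) ` V)"

definition normalized :: "'b set \<Rightarrow> ('b set \<Rightarrow> real) \<Rightarrow> bool" where
  "normalized U h \<longleftrightarrow> h {} = 0"

definition monotone_set_fun :: "'b set \<Rightarrow> ('b set \<Rightarrow> real) \<Rightarrow> bool" where
  "monotone_set_fun U h \<longleftrightarrow> (\<forall>A B. A \<subseteq> B \<and> B \<subseteq> U \<longrightarrow> h A \<le> h B)"

definition submodular :: "'b set \<Rightarrow> ('b set \<Rightarrow> real) \<Rightarrow> bool" where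
  "submodular U h \<longleftrightarrow>
     (\<forall>A B. A \<subseteq> U \<and> B \<subseteq> U \<longrightarrow> h A + h B \<ge> h (A \<union> B) + h (A \<inter> B))"

definition feasible_TU :: "'a set \<Rightarrow> 'a set set \<Rightarrow> nat \<Rightarrow> nat \<Rightarrow> 'a set set \<Rightarrow> bool" where
  "feasible_TU V E b k F \<longleftrightarrow> F \<subseteq> E \<and> card F \<le> k \<and>
     (\<exists>Vc. Vc \<subseteq> V \<and> is_vertex_cover Vc F \<and> card Vc \<le> b)"

definition greedy_run :: "('b set \<Rightarrow> real) \<Rightarrow> 'b set \<Rightarrow> 'b set \<Rightarrow> nat \<Rightarrow> 'b list \<Rightarrow> bool" where
  "greedy_run h S0 C n xs \<longleftrightarrow>
     length xs = min n (card C) \<and> distinct xs \<and> set xs \<subseteq> C \<and>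
     (\<forall>i < length xs. \<forall>x \<in> C - set (take i xs).
        h (S0 \<union> set (take i xs) \<union> {x}) \<le> h (S0 \<union> set (take i xs) \<union> {xs ! i}))"

text \<open>Edge-Greedy: Fout is a possible output (for some tie-breaking and some choice of
  endpoints in the vertex cover).\<close>
definition edge_greedy_output ::
  "'a set set \<Rightarrow> ('a set set \<Rightarrow> real) \<Rightarrow> nat \<Rightarrow> nat \<Rightarrow> 'a set set \<Rightarrow> bool" where
  "edge_greedy_output E f b k Fout \<longleftrightarrow>
     (\<exists>es g. greedy_run f {} E (min b k) es \<and> (\<forall>e \<in> set es. g e \<in> e) \<and>
        (let Egrd = set es; Vgrd = g ` set es in
          (if k > b then
             (\<exists>fs. greedy_run f Egrd (edges_of E Vgrd - Egrd) (k - b) fs \<and>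
                   Fout = Egrd \<union> set fs)
           else Fout = Egrd)))"

text \<open>Vertex-Greedy: vs lists the vertices added; the run stops either when no vertex
  remains or when the greedily chosen next vertex would violate a budget.\<close>
definition vertex_greedy_output ::
  "'a set \<Rightarrow> 'a set set \<Rightarrow> ('a set set \<Rightarrow> real) \<Rightarrow> nat \<Rightarrow> nat \<Rightarrow> 'a set set \<Rightarrow> bool" where
  "vertex_greedy_output V E f b k Fout \<longleftrightarrow>
     (\<exists>vs. let h = (\<lambda>Vs. f (edges_of E Vs)) in
        distinct vs \<and> set vs \<subseteq> V \<and>
        (\<forall>i < length vs. \<forall>v \<in> V - set (take i vs).
            h (set (take i vs) \<union> {v}) \<le> h (set (take i vs) \<union> {vs ! i})) \<and>
        length vs \<le> b \<and> card (edges_of E (set vs)) \<le> k \<and>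
        (set vs = V \<or>
         (\<exists>v \<in> V - set vs. (\<forall>u \<in> V - set vs. h (set vs \<union> {u}) \<le> h (set vs \<union> {v})) \<and>
             (card (set vs \<union> {v}) > b \<or> card (edges_of E (set vs \<union> {v})) > k))) \<and>
        Fout = edges_of E (set vs))"

definition alpha_bound :: "nat \<Rightarrow> nat \<Rightarrow> nat \<Rightarrow> real" where
  "alpha_bound b k \<Delta> =
     (let \<gamma> = max (real b / real k) (real (k div \<Delta>) / real b)
      in 1 - exp (- min 1 \<gamma>))"

end

theory Submission
  imports Defs
begin

text \<open>Both greedy procedures obey the classical estimate for greedy maximisation of a monotone
  submodular function: after \<open>t\<close> greedy steps against a competitor of size at most \<open>m\<close>,
  every step closes at least a \<open>1/m\<close> fraction of the remaining gap, so at least a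
  \<open>1 - (1 - 1/m)^t \<ge> 1 - exp (-t/m)\<close> fraction of the competitor's value is reached.
  Edge-Greedy takes \<open>min b k\<close> steps against the at most \<open>k\<close> edges of an optimal solution,
  giving the ratio \<open>1 - exp (- min 1 (b/k))\<close>.  Vertex-Greedy runs on
  \<open>X \<mapsto> f (edges X)\<close>, which is again monotone and submodular, against the at most \<open>b\<close>
  covering vertices of an optimal solution; it stops only after \<open>b\<close> vertices or when one more
  vertex (bringing at most \<open>\<Delta>\<close> edges) would exceed \<open>k\<close> edges, i.e. after at least
  \<open>min b \<lfloor>k/\<Delta>\<rfloor>\<close> steps.  The better of the two outputs attains the larger ratio.\<close>

lemma monotone_set_funD:
  "monotone_set_fun U h \<Longrightarrow> A \<subseteq> B \<Longrightarrow> B \<subseteq> U \<Longrightarrow> h A \<le> h B"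
  unfolding monotone_set_fun_def by blast

lemma submodularD:
  "submodular U h \<Longrightarrow> A \<subseteq> U \<Longrightarrow> B \<subseteq> U \<Longrightarrow> h (A \<union> B) + h (A \<inter> B) \<le> h A + h B"
  unfolding submodular_def by blast

lemma monotone_set_fun_nonneg:
  "monotone_set_fun U h \<Longrightarrow> h {} = 0 \<Longrightarrow> A \<subseteq> U \<Longrightarrow> 0 \<le> h A"
  using monotone_set_funD[of U h "{}" A] by simp

lemma edges_of_subset: "edges_of E X \<subseteq> E"
  by (auto simp: edges_of_def)

lemma edges_of_mono: "X \<subseteq> Y \<Longrightarrow> edges_of E X \<subseteq> edges_of E Y"
  by (auto simp: edges_of_def)

lemma edges_of_Un: "edges_of E (X \<union> Y) = edges_of E X \<union> edges_of E Y"
  by (auto simp: edges_of_def)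

lemma edges_of_Int_subset: "edges_of E (X \<inter> Y) \<subseteq> edges_of E X \<inter> edges_of E Y"
  by (auto simp: edges_of_def)

lemma monotone_set_fun_edges_of:
  assumes "monotone_set_fun E f"
  shows "monotone_set_fun V (\<lambda>X. f (edges_of E X))"
  unfolding monotone_set_fun_def
  using monotone_set_funD[OF assms edges_of_mono edges_of_subset] by blast

lemma submodular_edges_of:
  assumes mono: "monotone_set_fun E f" and sub: "submodular E f"
  shows "submodular V (\<lambda>X. f (edges_of E X))"
  unfolding submodular_def
proof (intro allI impI)
  fix A B
  have "f (edges_of E (A \<inter> B)) \<le> f (edges_of E A \<inter> edges_of E B)"
    by (rule monotone_set_funD[OF mono edges_of_Int_subset]) (use edges_of_subset in blast)
  moreover have "f (edges_of E A \<union> edges_of E B) + f (edges_of E A \<inter> edges_of E B)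
      \<le> f (edges_of E A) + f (edges_of E B)"
    by (rule submodularD[OF sub edges_of_subset edges_of_subset])
  ultimately show "f (edges_of E (A \<union> B)) + f (edges_of E (A \<inter> B))
      \<le> f (edges_of E A) + f (edges_of E B)"
    unfolding edges_of_Un by linarith
qed

lemma submodular_le_sum_marginal_gains:
  fixes h :: "'b set \<Rightarrow> real"
  assumes mono: "monotone_set_fun U h" and sub: "submodular U h"
    and "finite P" "P \<subseteq> U" "A \<subseteq> U"
  shows "h (A \<union> P) \<le> h A + (\<Sum>x\<in>P. h (A \<union> {x}) - h A)"
  using \<open>finite P\<close> \<open>P \<subseteq> U\<close>
proof (induction P rule: finite_induct)
  case empty
  show ?case by simp
next
  case (insert x P)
  have "A \<union> P \<subseteq> U" "A \<union> {x} \<subseteq> U"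
    using insert.prems \<open>A \<subseteq> U\<close> by auto
  have union: "(A \<union> P) \<union> (A \<union> {x}) = A \<union> insert x P"
    by auto
  from submodularD[OF sub \<open>A \<union> P \<subseteq> U\<close> \<open>A \<union> {x} \<subseteq> U\<close>]
  have "h (A \<union> insert x P) + h ((A \<union> P) \<inter> (A \<union> {x})) \<le> h (A \<union> P) + h (A \<union> {x})"
    unfolding union .
  moreover have "h A \<le> h ((A \<union> P) \<inter> (A \<union> {x}))"
    by (rule monotone_set_funD[OF mono]) (use \<open>A \<union> P \<subseteq> U\<close> in auto)
  ultimately show ?case
    using insert by simp
qed

text \<open>Some element of the competitor \<open>P\<close> gains at least \<open>1/m\<close> of the gap \<open>h P - h S\<close>,
  and the greedy choice \<open>y\<close> gains at least as much.\<close>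
lemma gap_le_card_mul_greedy_gain:
  fixes h :: "'b set \<Rightarrow> real"
  assumes mono: "monotone_set_fun U h" and sub: "submodular U h"
    and "C \<subseteq> U" "S \<subseteq> U" "y \<in> U"
    and best: "\<forall>x \<in> C - S. h (S \<union> {x}) \<le> h (S \<union> {y})"
    and "finite P" "P \<subseteq> C" "card P \<le> m"
  shows "h P - h S \<le> real m * (h (S \<union> {y}) - h S)"
proof -
  have "h S \<le> h (S \<union> {y})"
    by (rule monotone_set_funD[OF mono]) (use \<open>S \<subseteq> U\<close> \<open>y \<in> U\<close> in auto)
  then have gain_nonneg: "0 \<le> h (S \<union> {y}) - h S"
    by simp
  have gain_le: "h (S \<union> {x}) - h S \<le> h (S \<union> {y}) - h S" if "x \<in> P" for x
  proof (cases "x \<in> S")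
    case True
    then show ?thesis using gain_nonneg by (simp add: insert_absorb)
  next
    case False
    then show ?thesis using best \<open>P \<subseteq> C\<close> \<open>x \<in> P\<close> by auto
  qed
  have "P \<subseteq> U"
    using \<open>P \<subseteq> C\<close> \<open>C \<subseteq> U\<close> by blast
  have "h P \<le> h (S \<union> P)"
    by (rule monotone_set_funD[OF mono]) (use \<open>P \<subseteq> U\<close> \<open>S \<subseteq> U\<close> in auto)
  also have "\<dots> \<le> h S + (\<Sum>x\<in>P. h (S \<union> {x}) - h S)"
    by (rule submodular_le_sum_marginal_gains[OF mono sub \<open>finite P\<close> \<open>P \<subseteq> U\<close> \<open>S \<subseteq> U\<close>])
  also have "(\<Sum>x\<in>P. h (S \<union> {x}) - h S) \<le> real (card P) * (h (S \<union> {y}) - h S)"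
    using sum_mono[OF gain_le] by simp
  also have "\<dots> \<le> real m * (h (S \<union> {y}) - h S)"
    using \<open>card P \<le> m\<close> gain_nonneg by (simp add: mult_right_mono)
  finally show ?thesis by simp
qed

lemma one_minus_inverse_power_le_exp:
  assumes "m > 0"
  shows "(1 - 1 / real m) ^ t \<le> exp (- real t / real m)"
proof -
  have "(1 - 1 / real m) ^ t \<le> exp (- 1 / real m) ^ t"
    using assms exp_ge_add_one_self[of "- 1 / real m"] by (intro power_mono) auto
  also have "\<dots> = exp (- real t / real m)"
    by (simp add: exp_of_nat_mult[symmetric])
  finally show ?thesis .
qed

lemma greedy_approximation:
  fixes h :: "'b set \<Rightarrow> real"
  assumes mono: "monotone_set_fun U h" and sub: "submodular U h" and h0: "h {} = 0"
    and "C \<subseteq> U" "set xs \<subseteq> C"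
    and greedy: "\<forall>i < length xs. \<forall>x \<in> C - set (take i xs).
                   h (set (take i xs) \<union> {x}) \<le> h (set (take i xs) \<union> {xs ! i})"
    and "finite P" "P \<subseteq> C" "card P \<le> m" "m > 0"
  shows "(1 - exp (- real (length xs) / real m)) * h P \<le> h (set xs)"
proof -
  define q where "q = 1 - 1 / real m"
  define S where "S i = set (take i xs)" for i
  have S_U: "S i \<subseteq> U" for i
    using \<open>C \<subseteq> U\<close> \<open>set xs \<subseteq> C\<close> set_take_subset[of i xs] unfolding S_def by blast
  have gap_step: "h P - h (S (Suc i)) \<le> q * (h P - h (S i))" if "i < length xs" for i
  proof -
    have S_Suc: "S (Suc i) = S i \<union> {xs ! i}"
      using that by (simp add: S_def take_Suc_conv_app_nth)
    have "xs ! i \<in> U"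
      using that \<open>C \<subseteq> U\<close> \<open>set xs \<subseteq> C\<close> nth_mem by blast
    moreover have "\<forall>x \<in> C - S i. h (S i \<union> {x}) \<le> h (S i \<union> {xs ! i})"
      using greedy that unfolding S_def by blast
    ultimately have "h P - h (S i) \<le> real m * (h (S (Suc i)) - h (S i))"
      unfolding S_Suc using gap_le_card_mul_greedy_gain[OF mono sub \<open>C \<subseteq> U\<close> S_U] assms(7-9)
      by blast
    then show ?thesis
      using \<open>m > 0\<close> by (simp add: q_def field_simps)
  qed
  have gap: "h P - h (S i) \<le> q ^ i * h P" if "i \<le> length xs" for i
    using that
  proof (induction i)
    case 0
    show ?case using h0 by (simp add: S_def)
  next
    case (Suc i)
    have "0 \<le> q"
      using \<open>m > 0\<close> by (simp add: q_def)
    have "h P - h (S (Suc i)) \<le> q * (h P - h (S i))"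
      using gap_step Suc.prems by simp
    also have "\<dots> \<le> q * (q ^ i * h P)"
      using Suc \<open>0 \<le> q\<close> by (simp add: mult_left_mono)
    finally show ?case by simp
  qed
  have "0 \<le> h P"
    using monotone_set_fun_nonneg[OF mono h0] \<open>P \<subseteq> C\<close> \<open>C \<subseteq> U\<close> by blast
  then have "(1 - exp (- real (length xs) / real m)) * h P \<le> (1 - q ^ length xs) * h P"
    using one_minus_inverse_power_le_exp[OF \<open>m > 0\<close>] by (simp add: q_def mult_right_mono)
  also have "\<dots> \<le> h (set xs)"
    using gap[of "length xs"] by (simp add: S_def algebra_simps)
  finally show ?thesis .
qed

lemma greedy_runD:
  assumes "greedy_run h S0 C n xs"
  shows "length xs = min n (card C)" "distinct xs" "set xs \<subseteq> C"
    "\<forall>i < length xs. \<forall>x \<in> C - set (take i xs).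
       h (S0 \<union> set (take i xs) \<union> {x}) \<le> h (S0 \<union> set (take i xs) \<union> {xs ! i})"
  using assms unfolding greedy_run_def by blast+

lemma greedy_run_approximation:
  fixes h :: "'b set \<Rightarrow> real"
  assumes mono: "monotone_set_fun U h" and sub: "submodular U h" and h0: "h {} = 0"
    and "finite C" "C \<subseteq> U" and run: "greedy_run h {} C n xs"
    and "P \<subseteq> C" "card P \<le> m" "m > 0"
  shows "(1 - exp (- real n / real m)) * h P \<le> h (set xs)"
proof (cases "card C \<le> n")
  case True
  have "card (set xs) = card C"
    using greedy_runD(1,2)[OF run] True distinct_card[of xs] by simp
  then have "set xs = C"
    using card_subset_eq[OF \<open>finite C\<close> greedy_runD(3)[OF run]] by blast
  have "0 \<le> h P"
    using monotone_set_fun_nonneg[OF mono h0] \<open>P \<subseteq> C\<close> \<open>C \<subseteq> U\<close> by blast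
  then have "(1 - exp (- real n / real m)) * h P \<le> h P"
    by (simp add: mult_left_le_one_le)
  also have "\<dots> \<le> h (set xs)"
    unfolding \<open>set xs = C\<close> using monotone_set_funD[OF mono \<open>P \<subseteq> C\<close> \<open>C \<subseteq> U\<close>] .
  finally show ?thesis .
next
  case False
  then have "length xs = n"
    using greedy_runD(1)[OF run] by simp
  moreover have "finite P"
    using \<open>P \<subseteq> C\<close> \<open>finite C\<close> finite_subset by blast
  moreover note greedy_runD(4)[OF run, unfolded Un_empty_left]
  ultimately show ?thesis
    using greedy_approximation[OF mono sub h0 \<open>C \<subseteq> U\<close> greedy_runD(3)[OF run]] assms(7-9)
    by simp
qed

lemma simple_graph_edges_subset:
  "simple_graph V E \<Longrightarrow> e \<in> E \<Longrightarrow> e \<subseteq> V"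
  unfolding simple_graph_def by auto

lemma simple_graph_finite_edges:
  assumes "simple_graph V E"
  shows "finite E"
proof (rule finite_subset)
  show "E \<subseteq> Pow V"
    using simple_graph_edges_subset[OF assms] by blast
  show "finite (Pow V)"
    using assms unfolding simple_graph_def by simp
qed

lemma card_edges_of_le_max_degree:
  assumes "finite V" "X \<subseteq> V"
  shows "card (edges_of E X) \<le> card X * max_degree V E"
proof -
  have "finite X"
    using assms finite_subset by blast
  have "edges_of E X = (\<Union>v\<in>X. {e \<in> E. v \<in> e})"
    unfolding edges_of_def by auto
  then have "card (edges_of E X) \<le> (\<Sum>v\<in>X. card {e \<in> E. v \<in> e})"
    using card_UN_le[OF \<open>finite X\<close>] by simp
  also have "\<dots> \<le> (\<Sum>v\<in>X. max_degree V E)"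
    by (rule sum_mono) (use assms in \<open>auto simp: max_degree_def intro!: Max_ge\<close>)
  finally show ?thesis
    by simp
qed

lemma edge_greedy_outputE:
  assumes "edge_greedy_output E f b k Feg"
  obtains es g fs where "greedy_run f {} E (min b k) es" "\<forall>e \<in> set es. g e \<in> e"
    "set fs \<subseteq> edges_of E (g ` set es)" "length es + length fs \<le> k"
    "Feg = set es \<union> set fs"
proof -
  obtain es g where run: "greedy_run f {} E (min b k) es" and g: "\<forall>e \<in> set es. g e \<in> e"
    and phase2: "if k > b then
        \<exists>fs. greedy_run f (set es) (edges_of E (g ` set es) - set es) (k - b) fs \<and>
             Feg = set es \<union> set fs
      else Feg = set es"
    using assms unfolding edge_greedy_output_def Let_def by blast
  have "length es \<le> min b k"
    using greedy_runD(1)[OF run] by (simp add: min_le_iff_disj)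
  show thesis
  proof (cases "k > b")
    case True
    then obtain fs where run2: "greedy_run f (set es) (edges_of E (g ` set es) - set es) (k - b) fs"
      and Feg: "Feg = set es \<union> set fs"
      using phase2 by auto
    have "set fs \<subseteq> edges_of E (g ` set es)" "length fs \<le> k - b"
      using greedy_runD(1,3)[OF run2] by auto
    with \<open>length es \<le> min b k\<close> True have "length es + length fs \<le> k"
      by linarith
    then show thesis
      by (rule that[OF run g \<open>set fs \<subseteq> edges_of E (g ` set es)\<close> _ Feg])
  next
    case False
    with \<open>length es \<le> min b k\<close> show thesis
      using that[OF run g, of "[]"] phase2 by simp
  qed
qed

lemma edge_greedy_feasible:
  assumes "simple_graph V E" "edge_greedy_output E f b k Feg"
  shows "feasible_TU V E b k Feg"
proof -
  obtain es g fs where run: "greedy_run f {} E (min b k) es" and g: "\<forall>e \<in> set es. g e \<in> e"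
    and fs: "set fs \<subseteq> edges_of E (g ` set es)" and len: "length es + length fs \<le> k"
    and Feg: "Feg = set es \<union> set fs"
    using edge_greedy_outputE[OF assms(2)] .
  have es: "set es \<subseteq> E" "length es \<le> b"
    using greedy_runD(1,3)[OF run] by auto
  have "Feg \<subseteq> E"
    using es fs edges_of_subset unfolding Feg by blast
  moreover have "card Feg \<le> k"
    using card_Un_le[of "set es" "set fs"] card_length[of es] card_length[of fs] len
    unfolding Feg by linarith
  moreover have "g ` set es \<subseteq> V"
    using g es simple_graph_edges_subset[OF assms(1)] by blast
  moreover have "is_vertex_cover (g ` set es) Feg"
    using g fs unfolding Feg is_vertex_cover_def edges_of_def by blast
  moreover have "card (g ` set es) \<le> b"
    using card_image_le[OF finite_set, of g es] card_length[of es] es by linarith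
  ultimately show ?thesis
    unfolding feasible_TU_def by blast
qed

lemma edge_greedy_value:
  assumes "finite E" and mono: "monotone_set_fun E f" and sub: "submodular E f"
    and "f {} = 0" "k \<ge> 1" "feasible_TU V E b k F" "edge_greedy_output E f b k Feg"
  shows "(1 - exp (- min 1 (real b / real k))) * f F \<le> f Feg"
proof -
  obtain es g fs where run: "greedy_run f {} E (min b k) es"
    and fs: "set fs \<subseteq> edges_of E (g ` set es)" and Feg: "Feg = set es \<union> set fs"
    using edge_greedy_outputE[OF assms(7)] .
  have "F \<subseteq> E" "card F \<le> k"
    using \<open>feasible_TU V E b k F\<close> unfolding feasible_TU_def by auto
  have "real (min b k) / real k = min 1 (real b / real k)"
    using \<open>k \<ge> 1\<close> by (auto simp: min_def)
  then have "(1 - exp (- min 1 (real b / real k))) * f F \<le> f (set es)"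
    using greedy_run_approximation[OF mono sub \<open>f {} = 0\<close> \<open>finite E\<close> order.refl run
        \<open>F \<subseteq> E\<close> \<open>card F \<le> k\<close>] \<open>k \<ge> 1\<close>
    by simp
  also have "\<dots> \<le> f Feg"
  proof (rule monotone_set_funD[OF mono])
    show "set es \<subseteq> Feg"
      unfolding Feg by blast
    show "Feg \<subseteq> E"
      using greedy_runD(3)[OF run] fs edges_of_subset unfolding Feg by blast
  qed
  finally show ?thesis .
qed

lemma vertex_greedy_outputE:
  assumes "vertex_greedy_output V E f b k Fvg"
  obtains vs where "distinct vs" "set vs \<subseteq> V"
    "\<forall>i < length vs. \<forall>v \<in> V - set (take i vs).
       f (edges_of E (set (take i vs) \<union> {v})) \<le> f (edges_of E (set (take i vs) \<union> {vs ! i}))"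
    "length vs \<le> b" "card (edges_of E (set vs)) \<le> k"
    "set vs = V \<or> (\<exists>v \<in> V - set vs.
       b < card (set vs \<union> {v}) \<or> k < card (edges_of E (set vs \<union> {v})))"
    "Fvg = edges_of E (set vs)"
  using assms unfolding vertex_greedy_output_def Let_def by blast

lemma vertex_greedy_feasible:
  assumes "vertex_greedy_output V E f b k Fvg"
  shows "feasible_TU V E b k Fvg"
proof -
  obtain vs where "distinct vs" "set vs \<subseteq> V" "length vs \<le> b"
    "card (edges_of E (set vs)) \<le> k" "Fvg = edges_of E (set vs)"
    by (rule vertex_greedy_outputE[OF assms])
  then show ?thesis
    unfolding feasible_TU_def is_vertex_cover_def edges_of_def
    by (auto simp: distinct_card)
qed

text \<open>If Vertex-Greedy stops early, one more vertex would exceed the vertex budget or, since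
  each vertex brings at most \<open>\<Delta>\<close> edges, the edge budget.\<close>
lemma vertex_greedy_stop_length:
  assumes "finite V" "distinct vs" "set vs \<subseteq> V" "v \<in> V - set vs"
    and exceeds: "b < card (set vs \<union> {v}) \<or> k < card (edges_of E (set vs \<union> {v}))"
  shows "min 1 (real (k div max_degree V E) / real b) \<le> real (length vs) / real b"
  using exceeds
proof
  assume "b < card (set vs \<union> {v})"
  then have "b \<le> length vs"
    using assms(2,4) by (simp add: distinct_card)
  show ?thesis
  proof (cases "b = 0")
    case False
    with \<open>b \<le> length vs\<close> have "1 \<le> real (length vs) / real b"
      by simp
    then show ?thesis
      by linarith
  qed simp
next
  assume "k < card (edges_of E (set vs \<union> {v}))"
  also have "\<dots> \<le> (length vs + 1) * max_degree V E"
    using card_edges_of_le_max_degree[of V "set vs \<union> {v}" E] assms(1-4)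
    by (simp add: distinct_card)
  finally have "k div max_degree V E \<le> length vs"
    using less_mult_imp_div_less[of k "length vs + 1" "max_degree V E"] by simp
  then show ?thesis
    by (simp add: divide_right_mono min.coboundedI2)
qed

lemma vertex_greedy_value:
  assumes "finite V" and mono: "monotone_set_fun E f" and sub: "submodular E f"
    and "f {} = 0" "b \<ge> 1"
    and "feasible_TU V E b k F" and vg: "vertex_greedy_output V E f b k Fvg"
  shows "(1 - exp (- min 1 (real (k div max_degree V E) / real b))) * f F \<le> f Fvg"
proof -
  define h where "h X = f (edges_of E X)" for X
  have mono_h: "monotone_set_fun V h" and sub_h: "submodular V h"
    unfolding h_def using monotone_set_fun_edges_of[OF mono] submodular_edges_of[OF mono sub] .
  have h0: "h {} = 0"
    using \<open>f {} = 0\<close> by (simp add: h_def edges_of_def)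
  obtain Vc where "F \<subseteq> E" "Vc \<subseteq> V" "is_vertex_cover Vc F" "card Vc \<le> b"
    using \<open>feasible_TU V E b k F\<close> unfolding feasible_TU_def by blast
  have "F \<subseteq> edges_of E Vc"
    using \<open>F \<subseteq> E\<close> \<open>is_vertex_cover Vc F\<close> unfolding is_vertex_cover_def edges_of_def by blast
  then have "f F \<le> h Vc"
    unfolding h_def by (rule monotone_set_funD[OF mono _ edges_of_subset])
  obtain vs where "distinct vs" "set vs \<subseteq> V"
    and greedy: "\<forall>i < length vs. \<forall>v \<in> V - set (take i vs).
       h (set (take i vs) \<union> {v}) \<le> h (set (take i vs) \<union> {vs ! i})"
    and stop: "set vs = V \<or> (\<exists>v \<in> V - set vs.
       b < card (set vs \<union> {v}) \<or> k < card (edges_of E (set vs \<union> {v})))"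
    and Fvg: "Fvg = edges_of E (set vs)"
    unfolding h_def by (rule vertex_greedy_outputE[OF vg])
  define a where "a = 1 - exp (- min 1 (real (k div max_degree V E) / real b))"
  have "0 \<le> h Vc"
    using monotone_set_fun_nonneg[OF mono_h h0 \<open>Vc \<subseteq> V\<close>] .
  have "0 \<le> a"
    by (simp add: a_def)
  with \<open>f F \<le> h Vc\<close> have "a * f F \<le> a * h Vc"
    by (rule mult_left_mono)
  also have "a * h Vc \<le> h (set vs)"
  proof (cases "set vs = V")
    case True
    have "a * h Vc \<le> h Vc"
      using \<open>0 \<le> h Vc\<close> by (simp add: a_def mult_left_le_one_le)
    also have "\<dots> \<le> h (set vs)"
      unfolding True using monotone_set_funD[OF mono_h \<open>Vc \<subseteq> V\<close> order.refl] .
    finally show ?thesis .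
  next
    case False
    then obtain v where "v \<in> V - set vs"
      "b < card (set vs \<union> {v}) \<or> k < card (edges_of E (set vs \<union> {v}))"
      using stop by blast
    then have "min 1 (real (k div max_degree V E) / real b) \<le> real (length vs) / real b"
      by (rule vertex_greedy_stop_length[OF \<open>finite V\<close> \<open>distinct vs\<close> \<open>set vs \<subseteq> V\<close>])
    then have "a * h Vc \<le> (1 - exp (- real (length vs) / real b)) * h Vc"
      using \<open>0 \<le> h Vc\<close> by (simp add: a_def mult_right_mono)
    also have "\<dots> \<le> h (set vs)"
    proof (rule greedy_approximation[OF mono_h sub_h h0 order.refl \<open>set vs \<subseteq> V\<close> greedy])
      show "finite Vc"
        using \<open>Vc \<subseteq> V\<close> \<open>finite V\<close> finite_subset by blast
    qed (use \<open>Vc \<subseteq> V\<close> \<open>card Vc \<le> b\<close> \<open>b \<ge> 1\<close> in auto)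
    finally show ?thesis .
  qed
  finally show ?thesis
    unfolding a_def Fvg h_def .
qed

lemma alpha_bound_eq_max:
  "alpha_bound b k \<Delta> = max (1 - exp (- min 1 (real b / real k)))
                             (1 - exp (- min 1 (real (k div \<Delta>) / real b)))"
proof -
  have "mono (\<lambda>x::real. 1 - exp (- min 1 x))"
    by (auto intro!: monoI)
  from max_of_mono[OF this, of "real b / real k" "real (k div \<Delta>) / real b"]
  show ?thesis
    unfolding alpha_bound_def Let_def by simp
qed

theorem theorem3:
  fixes V :: "'a set" and E :: "'a set set" and f :: "'a set set \<Rightarrow> real"
    and b k :: nat and Feg Fvg :: "'a set set"
  assumes "simple_graph V E"
    and "b \<ge> 1" and "k \<ge> 1"
    and "\<forall>A \<subseteq> E. f A \<ge> 0"
    and "normalized E f" and "monotone_set_fun E f" and "submodular E f"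
    and "max_degree V E \<ge> 1"
    and "edge_greedy_output E f b k Feg"
    and "vertex_greedy_output V E f b k Fvg"
  shows "let Fout = (if f Feg \<ge> f Fvg then Feg else Fvg) in
           feasible_TU V E b k Fout \<and>
           (\<forall>F. feasible_TU V E b k F \<longrightarrow>
                  alpha_bound b k (max_degree V E) * f F \<le> f Fout)"
proof -
  have "finite V"
    using assms(1) unfolding simple_graph_def by simp
  have "finite E"
    using simple_graph_finite_edges[OF assms(1)] .
  have "f {} = 0"
    using assms(5) unfolding normalized_def .
  have bound: "alpha_bound b k (max_degree V E) * f F \<le> max (f Feg) (f Fvg)"
    if "feasible_TU V E b k F" for F
  proof -
    have "0 \<le> f F"
      using that assms(4) unfolding feasible_TU_def by blast
    then have "alpha_bound b k (max_degree V E) * f F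
        = max ((1 - exp (- min 1 (real b / real k))) * f F)
              ((1 - exp (- min 1 (real (k div max_degree V E) / real b))) * f F)"
      unfolding alpha_bound_eq_max by (simp add: max_mult_distrib_right)
    also have "\<dots> \<le> max (f Feg) (f Fvg)"
      using edge_greedy_value[OF \<open>finite E\<close> assms(6,7) \<open>f {} = 0\<close> assms(3) that assms(9)]
        vertex_greedy_value[OF \<open>finite V\<close> assms(6,7) \<open>f {} = 0\<close> assms(2) that assms(10)]
      by (rule max.mono)
    finally show ?thesis .
  qed
  show ?thesis
  proof (cases "f Fvg \<le> f Feg")
    case True
    then show ?thesis
      using edge_greedy_feasible[OF assms(1,9)] bound by (simp add: max_absorb1)
  next
    case False
    then show ?thesis
      using vertex_greedy_feasible[OF assms(10)] bound by (simp add: max_absorb2)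
  qed
qed

end
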